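(* Let $G$ be a right $\ell$-group with a strong order unit $s$, and let $g \in G^-$. Then $g$ has a unique right-normal factorization. It is given by $g = g_k g_{k-1}\cdots g_1$, where $k = \min\{ i \geq 0 : g \geq s^{-i}\}$ and \[ g_i = (g \vee s^{-i})(g \vee s^{-(i-1)})^{-1} \qquad (1 \leq i \leq k). \]
   Context: A right $\ell$-group is a group $G$ (identity $e$) with a partial order $\leq$ that is right-invariant ($x \leq y \Rightarrow xz \leq yz$ for all $x,y,z$) and under which $G$ is a lattice with meet $\wedge$ and join $\vee$. $G^- := \{g \in G : g \leq e\}$ is the negative cone, and $[a,b] := \{x : a \leq x \leq b\}$. An element $s \in G$ is normal if $x \mapsto sx$ is a lattice automorphism of $G$. It is a strong order unit if $s > e$, $s$ is normal, and for every $g \in G$ there is $k \in \mathbb{Z}$ with $g \leq s^k$. For $g \in G^-$, a right-normal factorization of $g$ is a finite sequence $g_1,\dots,g_k \in [s^{-1},e]$ ($k \geq 0$) satisfying three conditions: (1) $g = g_k g_{k-1}\cdots g_1$; (2) $g_i \neq e$ for all $i$; (3) for each $1 \leq i < k$ there do not exist $h,h' \in G^-$ with $h \neq e$, $h'h = g_{i+1}$ and $hg_i \in [s^{-1},e]$. *)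

theory Defs
  imports "HOL-Algebra.Group"
begin

definition is_join :: "'a set \<Rightarrow> ('a \<Rightarrow> 'a \<Rightarrow> bool) \<Rightarrow> 'a \<Rightarrow> 'a \<Rightarrow> 'a \<Rightarrow> bool" where
  "is_join A leq x y z \<longleftrightarrow> z \<in> A \<and> leq x z \<and> leq y z \<and> (\<forall>w\<in>A. leq x w \<and> leq y w \<longrightarrow> leq z w)"

definition is_meet :: "'a set \<Rightarrow> ('a \<Rightarrow> 'a \<Rightarrow> bool) \<Rightarrow> 'a \<Rightarrow> 'a \<Rightarrow> 'a \<Rightarrow> bool" where
  "is_meet A leq x y z \<longleftrightarrow> z \<in> A \<and> leq z x \<and> leq z y \<and> (\<forall>w\<in>A. leq w x \<and> leq w y \<longrightarrow> leq w z)"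

definition ljoin :: "('a, 'b) monoid_scheme \<Rightarrow> ('a \<Rightarrow> 'a \<Rightarrow> bool) \<Rightarrow> 'a \<Rightarrow> 'a \<Rightarrow> 'a" where
  "ljoin G leq x y = (THE z. is_join (carrier G) leq x y z)"

definition lmeet :: "('a, 'b) monoid_scheme \<Rightarrow> ('a \<Rightarrow> 'a \<Rightarrow> bool) \<Rightarrow> 'a \<Rightarrow> 'a \<Rightarrow> 'a" where
  "lmeet G leq x y = (THE z. is_meet (carrier G) leq x y z)"

definition right_lgroup :: "('a, 'b) monoid_scheme \<Rightarrow> ('a \<Rightarrow> 'a \<Rightarrow> bool) \<Rightarrow> bool" where
  "right_lgroup G leq \<longleftrightarrow> group G
     \<and> (\<forall>x\<in>carrier G. leq x x)
     \<and> (\<forall>x\<in>carrier G. \<forall>y\<in>carrier G. leq x y \<and> leq y x \<longrightarrow> x = y)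
     \<and> (\<forall>x\<in>carrier G. \<forall>y\<in>carrier G. \<forall>z\<in>carrier G. leq x y \<and> leq y z \<longrightarrow> leq x z)
     \<and> (\<forall>x\<in>carrier G. \<forall>y\<in>carrier G. \<forall>z\<in>carrier G. leq x y \<longrightarrow> leq (x \<otimes>\<^bsub>G\<^esub> z) (y \<otimes>\<^bsub>G\<^esub> z))
     \<and> (\<forall>x\<in>carrier G. \<forall>y\<in>carrier G. (\<exists>z. is_join (carrier G) leq x y z) \<and> (\<exists>z. is_meet (carrier G) leq x y z))"

definition lattice_automorphism :: "('a, 'b) monoid_scheme \<Rightarrow> ('a \<Rightarrow> 'a \<Rightarrow> bool) \<Rightarrow> ('a \<Rightarrow> 'a) \<Rightarrow> bool" where
  "lattice_automorphism G leq f \<longleftrightarrow> bij_betw f (carrier G) (carrier G)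
     \<and> (\<forall>x\<in>carrier G. \<forall>y\<in>carrier G. f (ljoin G leq x y) = ljoin G leq (f x) (f y)
                                      \<and> f (lmeet G leq x y) = lmeet G leq (f x) (f y))"

definition normal_elem :: "('a, 'b) monoid_scheme \<Rightarrow> ('a \<Rightarrow> 'a \<Rightarrow> bool) \<Rightarrow> 'a \<Rightarrow> bool" where
  "normal_elem G leq s \<longleftrightarrow> s \<in> carrier G \<and> lattice_automorphism G leq (\<lambda>x. s \<otimes>\<^bsub>G\<^esub> x)"

definition strong_order_unit :: "('a, 'b) monoid_scheme \<Rightarrow> ('a \<Rightarrow> 'a \<Rightarrow> bool) \<Rightarrow> 'a \<Rightarrow> bool" where
  "strong_order_unit G leq s \<longleftrightarrow> s \<in> carrier G \<and> leq \<one>\<^bsub>G\<^esub> s \<and> s \<noteq> \<one>\<^bsub>G\<^esub>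
     \<and> normal_elem G leq s
     \<and> (\<forall>g\<in>carrier G. \<exists>k::int. leq g (s [^]\<^bsub>G\<^esub> k))"

definition neg_cone :: "('a, 'b) monoid_scheme \<Rightarrow> ('a \<Rightarrow> 'a \<Rightarrow> bool) \<Rightarrow> 'a set" where
  "neg_cone G leq = {g \<in> carrier G. leq g \<one>\<^bsub>G\<^esub>}"

definition lint :: "('a, 'b) monoid_scheme \<Rightarrow> ('a \<Rightarrow> 'a \<Rightarrow> bool) \<Rightarrow> 'a \<Rightarrow> 'a \<Rightarrow> 'a set" where
  "lint G leq a b = {x \<in> carrier G. leq a x \<and> leq x b}"

text \<open>A list gs = [g_1, ..., g_k] represents the sequence g_1,...,g_k; its product
g_k * ... * g_1 is fold (\<lambda>x acc. x * acc) gs 1.\<close>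

definition rev_prod :: "('a, 'b) monoid_scheme \<Rightarrow> 'a list \<Rightarrow> 'a" where
  "rev_prod G gs = fold (\<lambda>x acc. x \<otimes>\<^bsub>G\<^esub> acc) gs \<one>\<^bsub>G\<^esub>"

definition right_normal_factorization ::
  "('a, 'b) monoid_scheme \<Rightarrow> ('a \<Rightarrow> 'a \<Rightarrow> bool) \<Rightarrow> 'a \<Rightarrow> 'a \<Rightarrow> 'a list \<Rightarrow> bool" where
  "right_normal_factorization G leq s g gs \<longleftrightarrow>
     (\<forall>i<length gs. gs ! i \<in> lint G leq (inv\<^bsub>G\<^esub> s) \<one>\<^bsub>G\<^esub>)
     \<and> g = rev_prod G gs
     \<and> (\<forall>i<length gs. gs ! i \<noteq> \<one>\<^bsub>G\<^esub>)
     \<and> (\<forall>i. i + 1 < length gs \<longrightarrow>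
          \<not> (\<exists>h\<in>neg_cone G leq. \<exists>h'\<in>neg_cone G leq. h \<noteq> \<one>\<^bsub>G\<^esub>
                \<and> h' \<otimes>\<^bsub>G\<^esub> h = gs ! (i + 1)
                \<and> h \<otimes>\<^bsub>G\<^esub> gs ! i \<in> lint G leq (inv\<^bsub>G\<^esub> s) \<one>\<^bsub>G\<^esub>))"

end

theory Submission
  imports Defs
begin

(*
  Put a_i = g \<squnion> s^-i, so that a_0 = e and a_i = g exactly for i \<ge> k. Left multiplication
  by s^-1 preserves joins because s is normal, and s^-1 g \<le> g; this gives the recurrence
  a_(i+1) = g \<squnion> s^-1 a_i.  A list g_1, ..., g_m in [s^-1, e] is governed by its partial
  products b_j = g_j ... g_1, which satisfy s^-1 b_j \<le> b_(j+1) \<le> b_j.  Condition (3) for the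
  pair (g_j, g_(j+1)) says that g_j = g_(j+1) g_j \<squnion> s^-1, i.e. b_j = b_(j+1) \<squnion> s^-1 b_(j-1),
  and descending from b_m = g these local identities are equivalent to the recurrence
  b_(j+1) = g \<squnion> s^-1 b_j.  So the partial products of a right-normal factorization of g are
  exactly a_0, ..., a_m, and m = k because the a_j are pairwise distinct until they reach g.
*)

section \<open>Right l-groups\<close>

locale right_l_group =
  fixes G :: "('a, 'b) monoid_scheme" (structure)
    and le :: "'a \<Rightarrow> 'a \<Rightarrow> bool" (infix \<open>\<preceq>\<close> 50)
  assumes right_lgroup: "right_lgroup G le"

sublocale right_l_group \<subseteq> group G
  using right_lgroup unfolding right_lgroup_def by blast

context right_l_group
begin

abbreviation join_le :: "'a \<Rightarrow> 'a \<Rightarrow> 'a" (infixl \<open>\<curlyvee>\<close> 65)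
  where "x \<curlyvee> y \<equiv> ljoin G le x y"

lemma le_refl: "x \<in> carrier G \<Longrightarrow> x \<preceq> x"
  using right_lgroup unfolding right_lgroup_def by blast

lemma le_antisym: "\<lbrakk>x \<preceq> y; y \<preceq> x; x \<in> carrier G; y \<in> carrier G\<rbrakk> \<Longrightarrow> x = y"
  using right_lgroup unfolding right_lgroup_def by blast

lemma le_trans:
  "\<lbrakk>x \<preceq> y; y \<preceq> z; x \<in> carrier G; y \<in> carrier G; z \<in> carrier G\<rbrakk> \<Longrightarrow> x \<preceq> z"
  using right_lgroup unfolding right_lgroup_def by blast

lemma mult_right_mono:
  "\<lbrakk>x \<preceq> y; x \<in> carrier G; y \<in> carrier G; z \<in> carrier G\<rbrakk> \<Longrightarrow> x \<otimes> z \<preceq> y \<otimes> z"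
  using right_lgroup unfolding right_lgroup_def by blast

lemma mult_le_cancel_right:
  assumes "x \<in> carrier G" "y \<in> carrier G" "z \<in> carrier G"
  shows "x \<otimes> z \<preceq> y \<otimes> z \<longleftrightarrow> x \<preceq> y"
proof
  assume "x \<otimes> z \<preceq> y \<otimes> z"
  then have "x \<otimes> z \<otimes> inv z \<preceq> y \<otimes> z \<otimes> inv z"
    using assms by (simp add: mult_right_mono)
  then show "x \<preceq> y" using assms by (simp add: m_assoc)
qed (use assms in \<open>simp add: mult_right_mono\<close>)

lemma le_mult_inv_iff:
  "\<lbrakk>x \<in> carrier G; y \<in> carrier G; z \<in> carrier G\<rbrakk> \<Longrightarrow> x \<preceq> y \<otimes> inv z \<longleftrightarrow> x \<otimes> z \<preceq> y"
  using mult_le_cancel_right[of x "y \<otimes> inv z" z] by (simp add: m_assoc)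

lemma mult_inv_le_iff:
  "\<lbrakk>x \<in> carrier G; y \<in> carrier G; z \<in> carrier G\<rbrakk> \<Longrightarrow> y \<otimes> inv z \<preceq> x \<longleftrightarrow> y \<preceq> x \<otimes> z"
  using mult_le_cancel_right[of "y \<otimes> inv z" x z] by (simp add: m_assoc)

lemma is_join_ljoin:
  assumes "x \<in> carrier G" "y \<in> carrier G"
  shows "is_join (carrier G) le x y (x \<curlyvee> y)"
proof -
  have "\<forall>x\<in>carrier G. \<forall>y\<in>carrier G. (\<exists>z. is_join (carrier G) le x y z) \<and> (\<exists>z. is_meet (carrier G) le x y z)"
    using right_lgroup unfolding right_lgroup_def by (elim conjE)
  then obtain z where z: "is_join (carrier G) le x y z"
    using assms by blast
  have "w = z" if "is_join (carrier G) le x y w" for w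
  proof (rule le_antisym)
    show "w \<preceq> z" "z \<preceq> w" "w \<in> carrier G" "z \<in> carrier G"
      using z that unfolding is_join_def by blast+
  qed
  with z show ?thesis
    unfolding ljoin_def by (rule theI)
qed

lemma join_closed [simp]: "\<lbrakk>x \<in> carrier G; y \<in> carrier G\<rbrakk> \<Longrightarrow> x \<curlyvee> y \<in> carrier G"
  using is_join_ljoin unfolding is_join_def by blast

lemma join_ge1: "\<lbrakk>x \<in> carrier G; y \<in> carrier G\<rbrakk> \<Longrightarrow> x \<preceq> x \<curlyvee> y"
  using is_join_ljoin unfolding is_join_def by blast

lemma join_ge2: "\<lbrakk>x \<in> carrier G; y \<in> carrier G\<rbrakk> \<Longrightarrow> y \<preceq> x \<curlyvee> y"
  using is_join_ljoin unfolding is_join_def by blast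

lemma join_least:
  "\<lbrakk>x \<preceq> z; y \<preceq> z; x \<in> carrier G; y \<in> carrier G; z \<in> carrier G\<rbrakk> \<Longrightarrow> x \<curlyvee> y \<preceq> z"
  using is_join_ljoin unfolding is_join_def by blast

lemma join_unique:
  assumes "x \<in> carrier G" "y \<in> carrier G" "z \<in> carrier G" "x \<preceq> z" "y \<preceq> z"
    and "\<And>w. \<lbrakk>w \<in> carrier G; x \<preceq> w; y \<preceq> w\<rbrakk> \<Longrightarrow> z \<preceq> w"
  shows "x \<curlyvee> y = z"
proof (rule le_antisym)
  show "x \<curlyvee> y \<preceq> z" using assms by (simp add: join_least)
  show "z \<preceq> x \<curlyvee> y" using assms by (simp add: join_ge1 join_ge2)
qed (use assms in simp_all)

lemma join_absorb2: "\<lbrakk>x \<preceq> y; x \<in> carrier G; y \<in> carrier G\<rbrakk> \<Longrightarrow> x \<curlyvee> y = y"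
  by (rule join_unique) (auto intro: le_refl)

lemma join_absorb1: "\<lbrakk>y \<preceq> x; x \<in> carrier G; y \<in> carrier G\<rbrakk> \<Longrightarrow> x \<curlyvee> y = x"
  by (rule join_unique) (auto intro: le_refl)

lemma le_iff_join:
  assumes "x \<in> carrier G" "y \<in> carrier G"
  shows "x \<preceq> y \<longleftrightarrow> x \<curlyvee> y = y"
proof
  assume "x \<preceq> y"
  then show "x \<curlyvee> y = y" using assms by (rule join_absorb2)
next
  assume "x \<curlyvee> y = y"
  then show "x \<preceq> y" using join_ge1[OF assms] by simp
qed

lemma join_eq_left_iff:
  assumes "x \<in> carrier G" "y \<in> carrier G"
  shows "x \<curlyvee> y = x \<longleftrightarrow> y \<preceq> x"
proof
  assume "x \<curlyvee> y = x"
  then show "y \<preceq> x" using join_ge2[OF assms] by simp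
qed (use assms join_absorb1 in blast)

lemma join_le_iff:
  assumes "x \<in> carrier G" "y \<in> carrier G" "z \<in> carrier G"
  shows "x \<curlyvee> y \<preceq> z \<longleftrightarrow> x \<preceq> z \<and> y \<preceq> z"
proof
  assume le: "x \<curlyvee> y \<preceq> z"
  show "x \<preceq> z \<and> y \<preceq> z"
    using le_trans[OF join_ge1 le] le_trans[OF join_ge2 le] assms by simp
qed (use assms in \<open>simp add: join_least\<close>)

lemma le_joinI2:
  assumes "x \<preceq> z" "x \<in> carrier G" "y \<in> carrier G" "z \<in> carrier G"
  shows "x \<preceq> y \<curlyvee> z"
  using le_trans[OF assms(1) join_ge2[of y z]] assms by simp

lemma join_assoc:
  assumes "x \<in> carrier G" "y \<in> carrier G" "z \<in> carrier G"
  shows "x \<curlyvee> y \<curlyvee> z = x \<curlyvee> (y \<curlyvee> z)"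
proof (rule join_unique)
  have "y \<preceq> x \<curlyvee> (y \<curlyvee> z)" "z \<preceq> x \<curlyvee> (y \<curlyvee> z)"
    using assms by (simp_all add: le_joinI2 join_ge1 join_ge2)
  then show "x \<curlyvee> y \<preceq> x \<curlyvee> (y \<curlyvee> z)" "z \<preceq> x \<curlyvee> (y \<curlyvee> z)"
    using assms by (simp_all add: join_le_iff join_ge1)
  fix w assume "w \<in> carrier G" "x \<curlyvee> y \<preceq> w" "z \<preceq> w"
  then show "x \<curlyvee> (y \<curlyvee> z) \<preceq> w" using assms by (simp add: join_le_iff)
qed (use assms in simp_all)

lemma join_mult_right:
  assumes "x \<in> carrier G" "y \<in> carrier G" "z \<in> carrier G"
  shows "(x \<curlyvee> y) \<otimes> z = x \<otimes> z \<curlyvee> y \<otimes> z"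
proof (rule sym, rule join_unique)
  show "x \<otimes> z \<preceq> (x \<curlyvee> y) \<otimes> z" "y \<otimes> z \<preceq> (x \<curlyvee> y) \<otimes> z"
    using assms by (simp_all add: join_ge1 join_ge2 mult_right_mono)
  fix w assume "w \<in> carrier G" "x \<otimes> z \<preceq> w" "y \<otimes> z \<preceq> w"
  then show "(x \<curlyvee> y) \<otimes> z \<preceq> w"
    using assms by (simp add: le_mult_inv_iff [symmetric] join_least)
qed (use assms in simp_all)

lemma normal_elem_mult_join:
  assumes "normal_elem G le s" "x \<in> carrier G" "y \<in> carrier G"
  shows "s \<otimes> (x \<curlyvee> y) = s \<otimes> x \<curlyvee> s \<otimes> y"
proof -
  have "\<forall>x\<in>carrier G. \<forall>y\<in>carrier G. s \<otimes> (x \<curlyvee> y) = s \<otimes> x \<curlyvee> s \<otimes> y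
      \<and> s \<otimes> lmeet G le x y = lmeet G le (s \<otimes> x) (s \<otimes> y)"
    using assms(1) unfolding normal_elem_def lattice_automorphism_def by (elim conjE)
  with assms(2,3) show ?thesis by blast
qed

lemma normal_elem_inv_mult_join:
  assumes "normal_elem G le s" "x \<in> carrier G" "y \<in> carrier G"
  shows "inv s \<otimes> (x \<curlyvee> y) = inv s \<otimes> x \<curlyvee> inv s \<otimes> y"
proof -
  have s: "s \<in> carrier G" using assms(1) unfolding normal_elem_def by (elim conjE)
  have "s \<otimes> (inv s \<otimes> x \<curlyvee> inv s \<otimes> y) = x \<curlyvee> y"
    using normal_elem_mult_join[OF assms(1), of "inv s \<otimes> x" "inv s \<otimes> y"] s assms(2,3)
    by (simp add: m_assoc [symmetric])
  then have "inv s \<otimes> (x \<curlyvee> y) = inv s \<otimes> (s \<otimes> (inv s \<otimes> x \<curlyvee> inv s \<otimes> y))"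
    by simp
  also have "\<dots> = inv s \<otimes> x \<curlyvee> inv s \<otimes> y"
    using s assms(2,3) by (simp add: m_assoc [symmetric])
  finally show ?thesis .
qed

lemma normal_elem_inv_mult_mono:
  assumes "normal_elem G le s" "x \<preceq> y" "x \<in> carrier G" "y \<in> carrier G"
  shows "inv s \<otimes> x \<preceq> inv s \<otimes> y"
proof -
  have s: "s \<in> carrier G" using assms(1) unfolding normal_elem_def by (elim conjE)
  have "x \<curlyvee> y = y" using assms(2-4) by (rule join_absorb2)
  then have "inv s \<otimes> x \<curlyvee> inv s \<otimes> y = inv s \<otimes> y"
    using normal_elem_inv_mult_join[OF assms(1,3,4)] by simp
  then show ?thesis
    using s assms(3,4) by (simp add: le_iff_join)
qed

end

section \<open>Partial products\<close>

lemma (in monoid) rev_prod_snoc: "rev_prod G (xs @ [x]) = x \<otimes> rev_prod G xs"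
  by (simp add: rev_prod_def)

context group
begin

definition partial_prod :: "'a list \<Rightarrow> nat \<Rightarrow> 'a" where
  "partial_prod fs j = rev_prod G (take j fs)"

definition successive_quotients :: "(nat \<Rightarrow> 'a) \<Rightarrow> nat \<Rightarrow> 'a list" where
  "successive_quotients a k = map (\<lambda>i. a (Suc i) \<otimes> inv (a i)) [0..<k]"

lemma partial_prod_0 [simp]: "partial_prod fs 0 = \<one>"
  by (simp add: partial_prod_def rev_prod_def)

lemma partial_prod_Suc: "j < length fs \<Longrightarrow> partial_prod fs (Suc j) = fs ! j \<otimes> partial_prod fs j"
  by (simp add: partial_prod_def take_Suc_conv_app_nth rev_prod_snoc)

lemma partial_prod_length [simp]: "partial_prod fs (length fs) = rev_prod G fs"
  by (simp add: partial_prod_def)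

lemma partial_prod_closed:
  assumes "set fs \<subseteq> carrier G"
  shows "j \<le> length fs \<Longrightarrow> partial_prod fs j \<in> carrier G"
proof (induction j)
  case (Suc j)
  then have "fs ! j \<in> carrier G" using assms nth_mem by fastforce
  with Suc show ?case by (simp add: partial_prod_Suc)
qed simp

lemma length_successive_quotients [simp]: "length (successive_quotients a k) = k"
  by (simp add: successive_quotients_def)

lemma nth_successive_quotients:
  "i < k \<Longrightarrow> successive_quotients a k ! i = a (Suc i) \<otimes> inv (a i)"
  by (simp add: successive_quotients_def)

lemma successive_quotients_cong:
  "(\<And>i. i \<le> k \<Longrightarrow> a i = b i) \<Longrightarrow> successive_quotients a k = successive_quotients b k"
  unfolding successive_quotients_def by (intro map_cong) auto

lemma partial_prod_successive_quotients:
  assumes "a 0 = \<one>" "\<And>i. i \<le> k \<Longrightarrow> a i \<in> carrier G"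
  shows "j \<le> k \<Longrightarrow> partial_prod (successive_quotients a k) j = a j"
proof (induction j)
  case (Suc j)
  then show ?case
    using assms(2)[of j] assms(2)[of "Suc j"]
    by (simp add: partial_prod_Suc nth_successive_quotients m_assoc)
qed (simp add: assms(1))

lemma successive_quotients_partial_prod:
  assumes "set fs \<subseteq> carrier G"
  shows "successive_quotients (partial_prod fs) (length fs) = fs"
proof (rule nth_equalityI)
  fix i assume "i < length (successive_quotients (partial_prod fs) (length fs))"
  then have i: "i < length fs" by simp
  then have "fs ! i \<in> carrier G" using assms nth_mem by fastforce
  with i show "successive_quotients (partial_prod fs) (length fs) ! i = fs ! i"
    using partial_prod_closed[OF assms, of i]
    by (simp add: nth_successive_quotients partial_prod_Suc m_assoc)
qed simp

end

section \<open>Strong order units and right-normal pairs\<close>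

locale right_l_group_unit = right_l_group +
  fixes s :: 'a
  assumes strong_unit: "strong_order_unit G le s"
begin

lemma unit_closed [simp]: "s \<in> carrier G"
  using strong_unit unfolding strong_order_unit_def by (elim conjE)

lemma unit_normal: "normal_elem G le s"
  using strong_unit unfolding strong_order_unit_def by (elim conjE)

lemma inv_unit_mult_mono: "\<lbrakk>x \<preceq> y; x \<in> carrier G; y \<in> carrier G\<rbrakk> \<Longrightarrow> inv s \<otimes> x \<preceq> inv s \<otimes> y"
  using normal_elem_inv_mult_mono[OF unit_normal] .

lemma inv_unit_le_one: "inv s \<preceq> \<one>"
proof -
  have "\<one> \<preceq> s" using strong_unit unfolding strong_order_unit_def by (elim conjE)
  then have "\<one> \<otimes> inv s \<preceq> s \<otimes> inv s" by (intro mult_right_mono) simp_all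
  then show ?thesis by simp
qed

lemma inv_unit_mult_le:
  assumes "x \<in> carrier G"
  shows "inv s \<otimes> x \<preceq> x"
proof -
  have "inv s \<otimes> x \<preceq> \<one> \<otimes> x"
    using assms by (intro mult_right_mono inv_unit_le_one) simp_all
  with assms show ?thesis by simp
qed

lemma inv_unit_pow_Suc: "inv (s [^] Suc (n::nat)) = inv s \<otimes> inv (s [^] n)"
  by (simp add: inv_mult_group)

lemma inv_unit_pow_mult_mono:
  "\<lbrakk>x \<preceq> y; x \<in> carrier G; y \<in> carrier G\<rbrakk> \<Longrightarrow> inv (s [^] (n::nat)) \<otimes> x \<preceq> inv (s [^] n) \<otimes> y"
proof (induction n)
  case (Suc n)
  then show ?case
    unfolding inv_unit_pow_Suc
    using inv_unit_mult_mono[OF Suc.IH] by (simp add: m_assoc)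
qed simp

lemma inv_unit_pow_antimono: "m \<le> n \<Longrightarrow> inv (s [^] (n::nat)) \<preceq> inv (s [^] m)"
proof (induction n rule: dec_induct)
  case (step n)
  have "inv (s [^] Suc (n::nat)) \<preceq> inv (s [^] n)"
    unfolding inv_unit_pow_Suc by (simp add: inv_unit_mult_le)
  from this step.IH show ?case by (rule le_trans) simp_all
qed (simp add: le_refl)

lemma neg_cone_bounded:
  assumes "g \<in> neg_cone G le"
  shows "\<exists>n::nat. inv (s [^] n) \<preceq> g"
proof -
  have g: "g \<in> carrier G" "g \<preceq> \<one>" using assms unfolding neg_cone_def by auto
  have "\<forall>x\<in>carrier G. \<exists>k::int. x \<preceq> s [^] k"
    using strong_unit unfolding strong_order_unit_def by (elim conjE)
  then obtain k :: int where k: "inv g \<preceq> s [^] k"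
    using g by blast
  obtain n :: nat where n: "inv g \<preceq> s [^] n"
  proof (cases "k < 0")
    case True
    have "inv (s [^] nat (- k)) \<preceq> inv (s [^] (0::nat))"
      by (rule inv_unit_pow_antimono) simp
    moreover have "s [^] k = inv (s [^] nat (- k))"
      using True by (simp only: int_pow_def2 if_True)
    ultimately have "s [^] k \<preceq> \<one>"
      by (simp only: nat_pow_0 inv_one)
    then have "inv g \<preceq> \<one>"
      using le_trans[OF k] g by simp
    then show thesis
      using that[of 0] by (simp only: nat_pow_0)
  next
    case False
    then have "s [^] k = s [^] nat k"
      by (simp only: int_pow_def2 if_False)
    with k show thesis
      using that by simp
  qed
  have "inv (s [^] n) \<otimes> inv g \<preceq> inv (s [^] n) \<otimes> s [^] n"
    using n g by (intro inv_unit_pow_mult_mono) simp_all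
  then have "inv (s [^] n) \<otimes> inv g \<preceq> \<one>"
    by simp
  then have "inv (s [^] n) \<preceq> g"
    using g mult_inv_le_iff[of \<one> "inv (s [^] n)" g] by simp
  then show ?thesis ..
qed

lemma quotient_in_unit_interval_iff:
  "\<lbrakk>x \<in> carrier G; y \<in> carrier G\<rbrakk>
    \<Longrightarrow> x \<otimes> inv y \<in> lint G le (inv s) \<one> \<longleftrightarrow> inv s \<otimes> y \<preceq> x \<and> x \<preceq> y"
  by (simp add: lint_def le_mult_inv_iff mult_inv_le_iff)

definition right_normal_pair :: "'a \<Rightarrow> 'a \<Rightarrow> bool" where
  "right_normal_pair x y \<longleftrightarrow> \<not> (\<exists>h\<in>neg_cone G le. \<exists>h'\<in>neg_cone G le.
      h \<noteq> \<one> \<and> h' \<otimes> h = y \<and> h \<otimes> x \<in> lint G le (inv s) \<one>)"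

lemma right_normal_factorization_iff:
  "right_normal_factorization G le s g fs \<longleftrightarrow>
     (\<forall>i<length fs. fs ! i \<in> lint G le (inv s) \<one> \<and> fs ! i \<noteq> \<one>) \<and> g = rev_prod G fs
     \<and> (\<forall>i. Suc i < length fs \<longrightarrow> right_normal_pair (fs ! i) (fs ! Suc i))"
  unfolding right_normal_factorization_def right_normal_pair_def by auto

lemma right_normal_pair_iff:
  assumes x: "x \<in> lint G le (inv s) \<one>" and y: "y \<in> carrier G" "y \<preceq> \<one>"
  shows "right_normal_pair x y \<longleftrightarrow> x = y \<otimes> x \<curlyvee> inv s"
proof
  have xc: "x \<in> carrier G" "inv s \<preceq> x" "x \<preceq> \<one>" using x unfolding lint_def by auto
  assume normal: "right_normal_pair x y"
  have yx_le: "y \<otimes> x \<preceq> x"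
    using mult_right_mono[OF y(2)] y(1) xc(1) by simp
  define c where "c = y \<otimes> x \<curlyvee> inv s"
  have c: "c \<in> carrier G" "y \<otimes> x \<preceq> c" "inv s \<preceq> c" "c \<preceq> x"
    unfolding c_def using xc y yx_le by (simp_all add: join_ge1 join_ge2 join_le_iff)
  define h where "h = c \<otimes> inv x"
  have h: "h \<in> neg_cone G le" "h \<otimes> x = c"
    unfolding h_def neg_cone_def using c xc by (simp_all add: mult_inv_le_iff m_assoc)
  have h': "y \<otimes> inv h \<in> neg_cone G le" "y \<otimes> inv h \<otimes> h = y"
    using h c xc y unfolding neg_cone_def h_def
    by (simp_all add: mult_inv_le_iff le_mult_inv_iff m_assoc)
  have "h \<otimes> x \<in> lint G le (inv s) \<one>"
    unfolding h(2) lint_def using c xc le_trans[OF c(4) xc(3)] by simp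
  with normal h h' have "h = \<one>"
    unfolding right_normal_pair_def by blast
  with h(2) xc show "x = y \<otimes> x \<curlyvee> inv s"
    unfolding c_def by simp
next
  assume x_eq: "x = y \<otimes> x \<curlyvee> inv s"
  show "right_normal_pair x y"
    unfolding right_normal_pair_def
  proof (intro notI, elim bexE conjE)
    fix h h' assume h: "h \<in> neg_cone G le" and h': "h' \<in> neg_cone G le"
      and "h \<noteq> \<one>" "h' \<otimes> h = y" and hx: "h \<otimes> x \<in> lint G le (inv s) \<one>"
    have xc: "x \<in> carrier G" using x unfolding lint_def by simp
    have hc: "h \<in> carrier G" "h \<preceq> \<one>" "h' \<in> carrier G" "h' \<preceq> \<one>"
      using h h' unfolding neg_cone_def by auto
    have "y \<otimes> x = h' \<otimes> (h \<otimes> x)"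
      unfolding \<open>h' \<otimes> h = y\<close> [symmetric] using hc xc by (simp add: m_assoc)
    also have "\<dots> \<preceq> \<one> \<otimes> (h \<otimes> x)"
      using hc xc by (intro mult_right_mono) simp_all
    finally have "y \<otimes> x \<preceq> h \<otimes> x"
      using hc xc by simp
    moreover have "inv s \<preceq> h \<otimes> x" using hx unfolding lint_def by simp
    ultimately have "y \<otimes> x \<curlyvee> inv s \<preceq> h \<otimes> x"
      using hc xc y by (simp add: join_least)
    then have "x \<preceq> h \<otimes> x"
      by (simp only: x_eq [symmetric])
    then have "\<one> \<preceq> h"
      using mult_le_cancel_right[of \<one> h x] hc xc by simp
    with hc \<open>h \<noteq> \<one>\<close> show False
      using le_antisym by blast
  qed
qed

lemma recurrence_local_iff_global:
  assumes closed: "\<And>j. j \<le> m \<Longrightarrow> b j \<in> carrier G"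
    and decreasing: "\<And>j. j < m \<Longrightarrow> b (Suc j) \<preceq> b j"
    and step: "\<And>j. j < m \<Longrightarrow> inv s \<otimes> b j \<preceq> b (Suc j)"
  shows "(\<forall>j. Suc j < m \<longrightarrow> b (Suc j) = b (Suc (Suc j)) \<curlyvee> inv s \<otimes> b j)
    \<longleftrightarrow> (\<forall>j<m. b (Suc j) = b m \<curlyvee> inv s \<otimes> b j)"
proof -
  have absorb: "b m \<curlyvee> inv s \<otimes> b (Suc j) \<curlyvee> inv s \<otimes> b j = b m \<curlyvee> inv s \<otimes> b j"
    if "Suc j < m" for j
  proof -
    have "inv s \<otimes> b (Suc j) \<preceq> inv s \<otimes> b j"
      using that closed decreasing by (simp add: inv_unit_mult_mono)
    with that closed show ?thesis
      by (simp add: join_assoc join_absorb2)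
  qed
  show ?thesis
  proof
    assume local: "\<forall>j. Suc j < m \<longrightarrow> b (Suc j) = b (Suc (Suc j)) \<curlyvee> inv s \<otimes> b j"
    show "\<forall>j<m. b (Suc j) = b m \<curlyvee> inv s \<otimes> b j"
    proof (intro allI impI)
      fix j assume "j < m"
      then have "j \<le> m - 1" by simp
      then show "b (Suc j) = b m \<curlyvee> inv s \<otimes> b j"
      proof (induction j rule: inc_induct)
        case base
        have "Suc (m - 1) = m" using \<open>j < m\<close> by simp
        with step[of "m - 1"] closed show ?case
          by (simp add: join_absorb1)
      next
        case (step n)
        then show ?case
          using local absorb[of n] by simp
      qed
    qed
  next
    assume "\<forall>j<m. b (Suc j) = b m \<curlyvee> inv s \<otimes> b j"
    then show "\<forall>j. Suc j < m \<longrightarrow> b (Suc j) = b (Suc (Suc j)) \<curlyvee> inv s \<otimes> b j"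
      using absorb by simp
  qed
qed

lemma right_normal_pairs_iff_recurrence:
  assumes fs: "\<forall>i<length fs. fs ! i \<in> lint G le (inv s) \<one>"
  shows "(\<forall>i. Suc i < length fs \<longrightarrow> right_normal_pair (fs ! i) (fs ! Suc i))
    \<longleftrightarrow> (\<forall>j<length fs. partial_prod fs (Suc j) = rev_prod G fs \<curlyvee> inv s \<otimes> partial_prod fs j)"
proof -
  have f: "fs ! i \<in> carrier G" "inv s \<preceq> fs ! i" "fs ! i \<preceq> \<one>" if "i < length fs" for i
    using fs that unfolding lint_def by auto
  have "set fs \<subseteq> carrier G"
    using f(1) by (auto simp: in_set_conv_nth)
  then have b: "partial_prod fs j \<in> carrier G" if "j \<le> length fs" for j
    using that by (rule partial_prod_closed)
  have pair_iff: "right_normal_pair (fs ! i) (fs ! Suc i) \<longleftrightarrow>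
      partial_prod fs (Suc i) = partial_prod fs (Suc (Suc i)) \<curlyvee> inv s \<otimes> partial_prod fs i"
    if i: "Suc i < length fs" for i
  proof -
    let ?x = "fs ! i" and ?y = "fs ! Suc i" and ?b = "partial_prod fs i"
    have "right_normal_pair ?x ?y \<longleftrightarrow> ?x = ?y \<otimes> ?x \<curlyvee> inv s"
      using i fs f by (intro right_normal_pair_iff) simp_all
    also have "\<dots> \<longleftrightarrow> ?x \<otimes> ?b = (?y \<otimes> ?x \<curlyvee> inv s) \<otimes> ?b"
      using i f b by simp
    also have "\<dots> \<longleftrightarrow> ?x \<otimes> ?b = ?y \<otimes> ?x \<otimes> ?b \<curlyvee> inv s \<otimes> ?b"
      using i f b by (simp add: join_mult_right)
    finally show ?thesis
      using i f b by (simp add: partial_prod_Suc m_assoc)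
  qed
  have "(\<forall>j. Suc j < length fs \<longrightarrow> partial_prod fs (Suc j) =
        partial_prod fs (Suc (Suc j)) \<curlyvee> inv s \<otimes> partial_prod fs j)
      \<longleftrightarrow> (\<forall>j<length fs. partial_prod fs (Suc j) =
        partial_prod fs (length fs) \<curlyvee> inv s \<otimes> partial_prod fs j)"
  proof (rule recurrence_local_iff_global)
    fix j assume "j < length fs"
    then show "partial_prod fs (Suc j) \<preceq> partial_prod fs j"
      "inv s \<otimes> partial_prod fs j \<preceq> partial_prod fs (Suc j)"
      using f b mult_right_mono[of "fs ! j" \<one> "partial_prod fs j"]
        mult_right_mono[of "inv s" "fs ! j" "partial_prod fs j"]
      by (simp_all add: partial_prod_Suc)
  qed (rule b)
  with pair_iff show ?thesis by auto
qed

end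

section \<open>The factorization of an element of the negative cone\<close>

locale negative_element = right_l_group_unit +
  fixes g :: 'a
  assumes neg: "g \<in> neg_cone G le"
begin

lemma g_closed [simp]: "g \<in> carrier G" and g_le_one: "g \<preceq> \<one>"
  using neg unfolding neg_cone_def by auto

definition trunc :: "nat \<Rightarrow> 'a" where
  "trunc i = g \<curlyvee> inv (s [^] i)"

definition depth :: nat where
  "depth = (LEAST i. inv (s [^] i) \<preceq> g)"

lemma trunc_closed [simp]: "trunc i \<in> carrier G"
  by (simp add: trunc_def)

lemma trunc_0: "trunc 0 = \<one>"
  by (simp add: trunc_def join_absorb2 g_le_one)

lemma trunc_Suc: "trunc (Suc i) = g \<curlyvee> inv s \<otimes> trunc i"
proof -
  have "inv s \<otimes> trunc i = inv s \<otimes> g \<curlyvee> inv (s [^] Suc i)"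
    unfolding trunc_def inv_unit_pow_Suc
    by (simp add: normal_elem_inv_mult_join[OF unit_normal])
  then have "g \<curlyvee> inv s \<otimes> trunc i = g \<curlyvee> inv s \<otimes> g \<curlyvee> inv (s [^] Suc i)"
    by (simp add: join_assoc)
  also have "\<dots> = trunc (Suc i)"
    unfolding trunc_def by (simp add: join_absorb1 inv_unit_mult_le)
  finally show ?thesis ..
qed

lemma trunc_Suc_le: "trunc (Suc i) \<preceq> trunc i"
proof -
  have "inv (s [^] Suc i) \<preceq> inv (s [^] i)"
    by (rule inv_unit_pow_antimono) simp
  then have "inv (s [^] Suc i) \<preceq> trunc i"
    unfolding trunc_def by (simp add: le_joinI2)
  moreover have "g \<preceq> trunc i"
    unfolding trunc_def by (simp add: join_ge1)
  ultimately show ?thesis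
    unfolding trunc_def[of "Suc i"] by (intro join_least) simp_all
qed

lemma inv_unit_mult_trunc_le: "inv s \<otimes> trunc i \<preceq> trunc (Suc i)"
  unfolding trunc_Suc by (simp add: join_ge2)

lemma depth_le_iff: "depth \<le> i \<longleftrightarrow> inv (s [^] i) \<preceq> g"
proof
  assume "depth \<le> i"
  then have "inv (s [^] i) \<preceq> inv (s [^] depth)"
    by (rule inv_unit_pow_antimono)
  moreover have "inv (s [^] depth) \<preceq> g"
    unfolding depth_def using neg_cone_bounded[OF neg] by (rule LeastI_ex)
  ultimately show "inv (s [^] i) \<preceq> g"
    by (rule le_trans) simp_all
qed (simp add: depth_def Least_le)

lemma trunc_eq_iff: "trunc i = g \<longleftrightarrow> depth \<le> i"
  unfolding depth_le_iff trunc_def by (simp add: join_eq_left_iff)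

lemma trunc_eq_g: "depth \<le> i \<Longrightarrow> trunc i = g"
  by (simp add: trunc_eq_iff)

lemma trunc_Suc_neq:
  assumes "i < depth"
  shows "trunc (Suc i) \<noteq> trunc i"
proof
  assume fixed: "trunc (Suc i) = trunc i"
  have stable: "trunc j = trunc i" if "i \<le> j" for j
    using that
  proof (induction j rule: dec_induct)
    case (step n)
    then have "trunc (Suc n) = trunc (Suc i)"
      by (simp only: trunc_Suc)
    with fixed show ?case by simp
  qed simp
  have "trunc i = g"
    using stable[of depth] assms trunc_eq_g[of depth] by simp
  with assms show False
    by (simp add: trunc_eq_iff)
qed

lemma right_normal_factorization_trunc:
  "right_normal_factorization G le s g (successive_quotients trunc depth)"
proof -
  let ?fs = "successive_quotients trunc depth"
  have prefix: "partial_prod ?fs j = trunc j" if "j \<le> depth" for j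
    using that by (intro partial_prod_successive_quotients) (simp_all add: trunc_0)
  have in_interval: "\<forall>i<length ?fs. ?fs ! i \<in> lint G le (inv s) \<one>"
    by (simp add: nth_successive_quotients quotient_in_unit_interval_iff
        inv_unit_mult_trunc_le trunc_Suc_le)
  have nontrivial: "\<forall>i<length ?fs. ?fs ! i \<noteq> \<one>"
    by (simp add: nth_successive_quotients inv_solve_right' trunc_Suc_neq)
  have product: "g = rev_prod G ?fs"
    using prefix[of depth] partial_prod_length[of ?fs] by (simp add: trunc_eq_g)
  have "\<forall>j<length ?fs. partial_prod ?fs (Suc j) = rev_prod G ?fs \<curlyvee> inv s \<otimes> partial_prod ?fs j"
    by (simp add: prefix trunc_Suc flip: product)
  then have "\<forall>i. Suc i < length ?fs \<longrightarrow> right_normal_pair (?fs ! i) (?fs ! Suc i)"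
    unfolding right_normal_pairs_iff_recurrence[OF in_interval] .
  with in_interval nontrivial product show ?thesis
    by (simp add: right_normal_factorization_iff)
qed

lemma right_normal_factorization_unique:
  assumes "right_normal_factorization G le s g fs"
  shows "fs = successive_quotients trunc depth"
proof -
  have in_interval: "\<forall>i<length fs. fs ! i \<in> lint G le (inv s) \<one>"
    and nontrivial: "\<forall>i<length fs. fs ! i \<noteq> \<one>"
    and product: "g = rev_prod G fs"
    and pairs: "\<forall>i. Suc i < length fs \<longrightarrow> right_normal_pair (fs ! i) (fs ! Suc i)"
    using assms by (simp_all add: right_normal_factorization_iff)
  have closed: "set fs \<subseteq> carrier G"
    using in_interval by (auto simp: in_set_conv_nth lint_def)
  have "\<forall>j<length fs. partial_prod fs (Suc j) = g \<curlyvee> inv s \<otimes> partial_prod fs j"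
    using pairs unfolding right_normal_pairs_iff_recurrence[OF in_interval] product .
  then have prefix: "partial_prod fs j = trunc j" if "j \<le> length fs" for j
    using that by (induction j) (simp_all add: trunc_0 trunc_Suc)
  have "successive_quotients (partial_prod fs) (length fs) = successive_quotients trunc (length fs)"
    by (rule successive_quotients_cong) (rule prefix)
  then have quotients: "fs = successive_quotients trunc (length fs)"
    by (simp only: successive_quotients_partial_prod[OF closed])
  have "trunc (length fs) = partial_prod fs (length fs)"
    using prefix[of "length fs"] by simp
  also have "\<dots> = g"
    using product by simp
  finally have "depth \<le> length fs"
    by (simp add: trunc_eq_iff)
  moreover have "\<not> depth < length fs"
  proof
    assume less: "depth < length fs"
    have "fs ! depth = trunc (Suc depth) \<otimes> inv (trunc depth)"
      using arg_cong[where f = "\<lambda>xs. xs ! depth", OF quotients] less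
      by (simp add: nth_successive_quotients)
    also have "\<dots> = \<one>"
      by (simp add: trunc_eq_g)
    finally show False
      using less nontrivial by simp
  qed
  ultimately have "length fs = depth" by simp
  from quotients show ?thesis
    unfolding \<open>length fs = depth\<close> .
qed

end

theorem mainTheorem1:
  fixes G :: "('a, 'b) monoid_scheme" and leq :: "'a \<Rightarrow> 'a \<Rightarrow> bool" and s g :: 'a
  assumes "right_lgroup G leq"
    and "strong_order_unit G leq s"
    and "g \<in> neg_cone G leq"
  shows "(\<exists>k::nat. leq (inv\<^bsub>G\<^esub> (s [^]\<^bsub>G\<^esub> k)) g)
    \<and> (\<exists>!gs. right_normal_factorization G leq s g gs)
    \<and> right_normal_factorization G leq s g
           (map (\<lambda>i. ljoin G leq g (inv\<^bsub>G\<^esub> (s [^]\<^bsub>G\<^esub> i))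
                     \<otimes>\<^bsub>G\<^esub> inv\<^bsub>G\<^esub> (ljoin G leq g (inv\<^bsub>G\<^esub> (s [^]\<^bsub>G\<^esub> (i - 1)))))
                [1..<(LEAST i::nat. leq (inv\<^bsub>G\<^esub> (s [^]\<^bsub>G\<^esub> i)) g) + 1])"
proof -
  interpret negative_element G leq s g
    using assms by unfold_locales
  have "[1..<depth + 1] = map Suc [0..<depth]"
    by (simp add: map_Suc_upt)
  then have "map (\<lambda>i. trunc i \<otimes>\<^bsub>G\<^esub> inv\<^bsub>G\<^esub> (trunc (i - 1))) [1..<depth + 1]
      = successive_quotients trunc depth"
    by (simp add: successive_quotients_def)
  moreover have "\<exists>!gs. right_normal_factorization G leq s g gs"
    using right_normal_factorization_trunc right_normal_factorization_unique by blast
  ultimately show ?thesis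
    using neg_cone_bounded[OF assms(3)] right_normal_factorization_trunc
    unfolding trunc_def depth_def by simp
qed

end
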